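(* Let $(V,\Omega)$ be a finite-dimensional real symplectic vector space and let $A:V\to V$ be a linear map with $\Omega(Ax,y)+\Omega(x,Ay)=0$ for all $x,y\in V$ and $A^2=0$. Let $\theta^A$ be the one-form on $V$ given by $\theta^A_z(v_z)=\frac{1}{2}\Omega(z-Az,v)$. Then ${\rm Aut}(V,\theta^A)=\{g\in{\rm Sp}(V,\Omega): gA=Ag\}$, where ${\rm Aut}(V,\theta^A)$ is the group of all diffeomorphisms $g:V\to V$ satisfying $g^*\theta^A=\theta^A$.
   Context: $V$ is a finite-dimensional real vector space and $\Omega$ a nonsingular alternating bilinear form on $V$. For $z,v\in V$, $v_z\in T_zV$ denotes the tangent vector at $z$ corresponding to $v$ under the canonical identification $T_zV\cong V$. Equivalently, $\theta^A=\theta^0+d\psi^A$ where $\theta^0_z(v_z)=\frac12\Omega(z,v)$ and $\psi^A(z)=\frac14\Omega(z,Az)$. For a smooth map $g:V\to V$, $(g^*\theta^A)_z(v_z)=\frac12\Omega(g(z)-Ag(z),g'_z v)$, where $g'_z$ is the derivative of $g$ at $z$. ${\rm Sp}(V,\Omega)$ is the group of linear automorphisms of $V$ preserving $\Omega$. *)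

theory Defs
  imports "HOL-Analysis.Analysis"
begin

text \<open>Smooth (C-infinity) maps between finite-dimensional real spaces: f is
differentiable everywhere, continuous, and each directional derivative
z \<mapsto> Df(z) v is again smooth (coinductively, i.e. all iterated
derivatives exist and are continuous).\<close>
coinductive smooth_map :: "('a::euclidean_space \<Rightarrow> 'b::euclidean_space) \<Rightarrow> bool" where
  "\<lbrakk> \<forall>z. f differentiable (at z); continuous_on UNIV f;
     \<forall>v. smooth_map (\<lambda>z. frechet_derivative f (at z) v) \<rbrakk> \<Longrightarrow> smooth_map f"

definition diffeomorphism :: "('a::euclidean_space \<Rightarrow> 'a) \<Rightarrow> bool" where
  "diffeomorphism g \<longleftrightarrow> bij g \<and> smooth_map g \<and> smooth_map (inv g)"

definition symplectic_form :: "('a::euclidean_space \<Rightarrow> 'a \<Rightarrow> real) \<Rightarrow> bool" where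
  "symplectic_form \<Omega> \<longleftrightarrow> bilinear \<Omega> \<and> (\<forall>x. \<Omega> x x = 0)
     \<and> (\<forall>x. (\<forall>y. \<Omega> x y = 0) \<longrightarrow> x = 0)"

definition Sp :: "('a::euclidean_space \<Rightarrow> 'a \<Rightarrow> real) \<Rightarrow> ('a \<Rightarrow> 'a) set" where
  "Sp \<Omega> = {g. linear g \<and> bij g \<and> (\<forall>x y. \<Omega> (g x) (g y) = \<Omega> x y)}"

text \<open>One-forms on V: \<alpha> z v is the value of \<alpha>_z on the tangent vector v_z.\<close>
definition theta :: "('a::euclidean_space \<Rightarrow> 'a \<Rightarrow> real) \<Rightarrow> ('a \<Rightarrow> 'a) \<Rightarrow> 'a \<Rightarrow> 'a \<Rightarrow> real" where
  "theta \<Omega> A z v = (1/2) * \<Omega> (z - A z) v"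

definition pullback :: "('a::euclidean_space \<Rightarrow> 'a) \<Rightarrow> ('a \<Rightarrow> 'a \<Rightarrow> real) \<Rightarrow> 'a \<Rightarrow> 'a \<Rightarrow> real" where
  "pullback g \<alpha> z v = \<alpha> (g z) (frechet_derivative g (at z) v)"

definition Aut :: "('a::euclidean_space \<Rightarrow> 'a \<Rightarrow> real) \<Rightarrow> ('a \<Rightarrow> 'a) set" where
  "Aut \<alpha> = {g. diffeomorphism g \<and> pullback g \<alpha> = \<alpha>}"

end

theory Submission
  imports Defs "HOL-Real_Asymp.Real_Asymp"
begin

text \<open>Write \<open>Z(z) = z - Az\<close>, so that \<open>\<theta>\<^sup>A\<^sub>z = (1/2) \<Omega>(Z(z), -)\<close>; the exterior derivative of \<open>\<theta>\<^sup>A\<close>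
is \<open>\<Omega>\<close>, and since \<open>A\<^sup>2 = 0\<close> the vector field \<open>Z\<close> has the explicit flow
\<open>\<phi>\<^sub>s(z) = e\<^sup>s(z - sAz)\<close>. An automorphism \<open>g\<close> of \<open>\<theta>\<^sup>A\<close> preserves \<open>d\<theta>\<^sup>A = \<Omega>\<close>, so every
derivative \<open>g'\<^sub>z\<close> is symplectic, and comparing \<open>\<theta>\<^sup>A\<close> with \<open>g\<^sup>*\<theta>\<^sup>A\<close> then gives
\<open>g'\<^sub>z(Z(z)) = Z(g(z))\<close>: \<open>g\<close> commutes with the flow. Differentiating \<open>g \<circ> \<phi>\<^sub>s = \<phi>\<^sub>s \<circ> g\<close>
and letting \<open>s \<rightarrow> -\<infinity>\<close>, where \<open>\<phi>\<^sub>s(z) \<rightarrow> 0\<close>, shows \<open>g'\<^sub>z = g'\<^sub>0\<close> and \<open>g'\<^sub>0 A = A g'\<^sub>0\<close>, because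
the terms growing linearly in \<open>s\<close> must vanish. As \<open>g\<close> fixes \<open>0\<close>, the only fixed point
of \<open>\<phi>\<^sub>1\<close>, it equals the linear map \<open>g'\<^sub>0\<close>.\<close>

lemma smooth_map_affine:
  assumes "linear L"
  shows "smooth_map (\<lambda>z. L z + (c::'b::euclidean_space))"
proof -
  define X where "X = (\<lambda>f::'a::euclidean_space \<Rightarrow> 'b. \<exists>L c. linear L \<and> f = (\<lambda>z. L z + c))"
  have "X (\<lambda>z. L z + c)" using assms unfolding X_def by blast
  then show ?thesis
  proof (rule smooth_map.coinduct[of X])
    fix f assume "X f"
    then obtain L c where L: "linear L" and f: "f = (\<lambda>z. L z + c)" unfolding X_def by blast
    have bl: "bounded_linear L" using L linear_conv_bounded_linear by blast
    have d: "(f has_derivative L) (at z)" for z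
      unfolding f using bounded_linear.has_derivative[OF bl has_derivative_ident]
      by (auto intro!: derivative_eq_intros)
    have fd: "frechet_derivative f (at z) = L" for z using d frechet_derivative_at by metis
    show "\<exists>f'. f = f' \<and> (\<forall>z. f' differentiable at z) \<and> continuous_on UNIV f' \<and>
      (\<forall>v. X (\<lambda>z. frechet_derivative f' (at z) v) \<or> smooth_map (\<lambda>z. frechet_derivative f' (at z) v))"
    proof (rule exI[of _ f], intro conjI allI refl)
      show "f differentiable at z" for z using d differentiable_def by blast
      show "continuous_on UNIV f" unfolding f by (intro continuous_intros linear_continuous_on bl)
      show "X (\<lambda>z. frechet_derivative f (at z) v) \<or> smooth_map (\<lambda>z. frechet_derivative f (at z) v)" for v
        by (rule disjI1) (auto simp: fd X_def intro!: exI[of _ "\<lambda>_. 0"] linear_zero)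
    qed
  qed
qed

lemma smooth_map_linear: "linear L \<Longrightarrow> smooth_map L"
  using smooth_map_affine[of L 0] by simp

lemma smooth_map_C2:
  fixes g :: "'a::euclidean_space \<Rightarrow> 'b::euclidean_space"
  assumes "smooth_map g"
  defines "Dg \<equiv> \<lambda>z. frechet_derivative g (at z)"
  defines "D2 \<equiv> \<lambda>z v. frechet_derivative (\<lambda>z. Dg z v) (at z)"
  shows "\<And>z. (g has_derivative Dg z) (at z)"
    and "\<And>v. continuous_on UNIV (\<lambda>z. Dg z v)"
    and "\<And>v z. ((\<lambda>z. Dg z v) has_derivative D2 z v) (at z)"
    and "\<And>v w. continuous_on UNIV (\<lambda>z. D2 z v w)"
proof -
  have a: "\<forall>z. g differentiable at z" and b: "\<forall>v. smooth_map (\<lambda>z. Dg z v)"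
    using assms(1) unfolding Dg_def by (auto elim: smooth_map.cases)
  show "(g has_derivative Dg z) (at z)" for z
    using a frechet_derivative_works unfolding Dg_def by blast
  fix v
  have c: "\<forall>z. (\<lambda>z. Dg z v) differentiable at z" "continuous_on UNIV (\<lambda>z. Dg z v)"
     "\<forall>w. smooth_map (\<lambda>z. D2 z v w)"
    using b[rule_format, of v] unfolding D2_def by (auto elim: smooth_map.cases)
  show "continuous_on UNIV (\<lambda>z. Dg z v)" using c by blast
  show "((\<lambda>z. Dg z v) has_derivative D2 z v) (at z)" for z
    using c(1) frechet_derivative_works unfolding D2_def by blast
  show "continuous_on UNIV (\<lambda>z. D2 z v w)" for w
    using c(3) by (auto elim: smooth_map.cases)
qed

lemma has_derivative_inner_along_line:
  assumes "\<And>z. (F has_derivative DF z) (at z)"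
  shows "((\<lambda>s. e \<bullet> F (a + s *\<^sub>R b)) has_derivative (\<lambda>t. t * (e \<bullet> DF (a + s *\<^sub>R b) b))) (at s within S)"
proof -
  have "((\<lambda>s. a + s *\<^sub>R b) has_derivative (\<lambda>t. t *\<^sub>R b)) (at s within S)"
    by (auto intro!: derivative_eq_intros)
  from has_derivative_compose[OF this assms]
  have "((\<lambda>s. F (a + s *\<^sub>R b)) has_derivative (\<lambda>t. DF (a + s *\<^sub>R b) (t *\<^sub>R b))) (at s within S)" .
  from bounded_linear.has_derivative[OF bounded_linear_inner_right this]
  have "((\<lambda>s. e \<bullet> F (a + s *\<^sub>R b)) has_derivative (\<lambda>t. e \<bullet> DF (a + s *\<^sub>R b) (t *\<^sub>R b))) (at s within S)" .
  moreover have "linear (DF (a + s *\<^sub>R b))"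
    using assms has_derivative_linear by blast
  ultimately show ?thesis by (simp add: linear_scale)
qed

lemma second_difference_mean_value:
  fixes f :: "'a::euclidean_space \<Rightarrow> 'b::euclidean_space"
  assumes d1: "\<And>z. (f has_derivative Df z) (at z)"
   and d2: "\<And>v z. ((\<lambda>z. Df z v) has_derivative D2 z v) (at z)"
   and h: "h > 0"
  shows "\<exists>p. norm (p - z) \<le> h * (norm v + norm w) \<and>
     e \<bullet> (f (z + h *\<^sub>R w + h *\<^sub>R v) - f (z + h *\<^sub>R w) - f (z + h *\<^sub>R v) + f z) = h^2 * (e \<bullet> D2 p w v)"
proof -
  define \<phi> where "\<phi> s = e \<bullet> f ((z + h *\<^sub>R v) + s *\<^sub>R w) - e \<bullet> f (z + s *\<^sub>R w)" for s
  have "(\<phi> has_derivative (\<lambda>t. t * (e \<bullet> Df ((z + h *\<^sub>R v) + s *\<^sub>R w) w - e \<bullet> Df (z + s *\<^sub>R w) w)))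
      (at s within {0..h})" for s
    unfolding \<phi>_def
    by (rule derivative_eq_intros has_derivative_inner_along_line[OF d1] | simp add: algebra_simps)+
  from mvt_simple[OF h this]
  obtain \<xi> where \<xi>: "\<xi> \<in> {0<..<h}" and
    e1: "\<phi> h - \<phi> 0 = (h - 0) * (e \<bullet> Df ((z + h *\<^sub>R v) + \<xi> *\<^sub>R w) w - e \<bullet> Df (z + \<xi> *\<^sub>R w) w)"
    by blast
  define \<psi> where "\<psi> t = e \<bullet> Df ((z + \<xi> *\<^sub>R w) + t *\<^sub>R v) w" for t
  have "(\<psi> has_derivative (\<lambda>t. t * (e \<bullet> D2 ((z + \<xi> *\<^sub>R w) + s *\<^sub>R v) w v))) (at s within {0..h})" for s
    unfolding \<psi>_def by (rule has_derivative_inner_along_line[OF d2])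
  from mvt_simple[OF h this]
  obtain \<eta> where \<eta>: "\<eta> \<in> {0<..<h}" and
    e2: "\<psi> h - \<psi> 0 = (h - 0) * (e \<bullet> D2 ((z + \<xi> *\<^sub>R w) + \<eta> *\<^sub>R v) w v)"
    by blast
  define p where "p = (z + \<xi> *\<^sub>R w) + \<eta> *\<^sub>R v"
  have "norm (p - z) \<le> norm (\<xi> *\<^sub>R w) + norm (\<eta> *\<^sub>R v)"
    unfolding p_def by (metis add_diff_cancel_left' norm_triangle_ineq add.assoc)
  also have "\<dots> \<le> h * norm w + h * norm v"
    using \<xi> \<eta> by (intro add_mono) (auto intro!: mult_right_mono)
  finally have n: "norm (p - z) \<le> h * (norm v + norm w)" by (simp add: algebra_simps)
  have "e \<bullet> (f (z + h *\<^sub>R w + h *\<^sub>R v) - f (z + h *\<^sub>R w) - f (z + h *\<^sub>R v) + f z) = \<phi> h - \<phi> 0"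
    unfolding \<phi>_def by (simp add: inner_diff_right inner_add_right algebra_simps)
  also have "\<dots> = h * (\<psi> h - \<psi> 0)" using e1 unfolding \<psi>_def by (simp add: algebra_simps)
  also have "\<dots> = h^2 * (e \<bullet> D2 p w v)" using e2 unfolding p_def by (simp add: power2_eq_square)
  finally show ?thesis using n by blast
qed

lemma second_difference_quotient_tendsto:
  fixes f :: "'a::euclidean_space \<Rightarrow> 'b::euclidean_space"
  assumes d1: "\<And>z. (f has_derivative Df z) (at z)"
   and d2: "\<And>v z. ((\<lambda>z. Df z v) has_derivative D2 z v) (at z)"
   and c2: "isCont (\<lambda>p. D2 p w v) z"
  shows "((\<lambda>h. e \<bullet> (f (z + h *\<^sub>R w + h *\<^sub>R v) - f (z + h *\<^sub>R w) - f (z + h *\<^sub>R v) + f z) / h^2)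
           \<longlongrightarrow> e \<bullet> D2 z w v) (at_right 0)"
proof -
  define \<Delta> where "\<Delta> h = e \<bullet> (f (z + h *\<^sub>R w + h *\<^sub>R v) - f (z + h *\<^sub>R w) - f (z + h *\<^sub>R v) + f z)"
    for h
  have "\<forall>h. \<exists>p. h > 0 \<longrightarrow> norm (p - z) \<le> h * (norm v + norm w) \<and> \<Delta> h = h^2 * (e \<bullet> D2 p w v)"
    using second_difference_mean_value[OF d1 d2] unfolding \<Delta>_def by blast
  then obtain P where P_near: "\<And>h. h > 0 \<Longrightarrow> norm (P h - z) \<le> h * (norm v + norm w)"
    and P_mean: "\<And>h. h > 0 \<Longrightarrow> \<Delta> h = h^2 * (e \<bullet> D2 (P h) w v)"
    by metis
  have pos: "\<forall>\<^sub>F h in at_right 0. h > (0::real)"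
    by (simp add: eventually_at_right_less)
  have "\<forall>\<^sub>F h in at_right 0. norm (P h - z) \<le> h * (norm v + norm w)"
    using pos by (rule eventually_mono) (rule P_near)
  moreover have "((\<lambda>h. h * (norm v + norm w)) \<longlongrightarrow> 0) (at_right 0)"
    by (intro tendsto_mult_left_zero tendsto_ident_at)
  ultimately have "((\<lambda>h. P h - z) \<longlongrightarrow> 0) (at_right 0)"
    by (rule Lim_null_comparison)
  then have "(P \<longlongrightarrow> z) (at_right 0)"
    by (rule LIM_zero_cancel)
  from tendsto_inner[OF tendsto_const isCont_tendsto_compose[OF c2 this]]
  have "((\<lambda>h. e \<bullet> D2 (P h) w v) \<longlongrightarrow> e \<bullet> D2 z w v) (at_right 0)" .
  moreover have "\<forall>\<^sub>F h in at_right 0. e \<bullet> D2 (P h) w v = \<Delta> h / h^2"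
    using pos by (rule eventually_mono) (simp add: P_mean)
  ultimately show ?thesis
    unfolding \<Delta>_def[symmetric] by (rule Lim_transform_eventually)
qed

lemma second_derivative_symmetric:
  fixes f :: "'a::euclidean_space \<Rightarrow> 'b::euclidean_space"
  assumes d1: "\<And>z. (f has_derivative Df z) (at z)"
   and d2: "\<And>v z. ((\<lambda>z. Df z v) has_derivative D2 z v) (at z)"
   and c2: "\<And>v w. continuous_on UNIV (\<lambda>z. D2 z v w)"
  shows "D2 z v w = D2 z w v"
proof (rule euclidean_eqI)
  fix e :: 'b
  have c: "isCont (\<lambda>p. D2 p x y) z" for x y
    using c2 by (simp add: continuous_on_eq_continuous_at)
  have "((\<lambda>h. e \<bullet> (f (z + h *\<^sub>R v + h *\<^sub>R w) - f (z + h *\<^sub>R v) - f (z + h *\<^sub>R w) + f z) / h^2)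
           \<longlongrightarrow> e \<bullet> D2 z v w) (at_right 0)"
    by (rule second_difference_quotient_tendsto[OF d1 d2 c])
  then have "((\<lambda>h. e \<bullet> (f (z + h *\<^sub>R w + h *\<^sub>R v) - f (z + h *\<^sub>R w) - f (z + h *\<^sub>R v) + f z) / h^2)
           \<longlongrightarrow> e \<bullet> D2 z v w) (at_right 0)"
    by (simp add: algebra_simps)
  moreover have "((\<lambda>h. e \<bullet> (f (z + h *\<^sub>R w + h *\<^sub>R v) - f (z + h *\<^sub>R w) - f (z + h *\<^sub>R v) + f z) / h^2)
           \<longlongrightarrow> e \<bullet> D2 z w v) (at_right 0)"
    by (rule second_difference_quotient_tendsto[OF d1 d2 c])
  ultimately have "e \<bullet> D2 z v w = e \<bullet> D2 z w v"
    using tendsto_unique[OF trivial_limit_at_right_real] by blast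
  then show "D2 z v w \<bullet> e = D2 z w v \<bullet> e"
    by (simp add: inner_commute)
qed

lemma tendsto_affine_at_bot_imp:
  fixes a b c :: "'a::real_normed_vector"
  assumes lim: "((\<lambda>s::real. a + s *\<^sub>R b) \<longlongrightarrow> c) at_bot"
  shows "b = 0 \<and> a = c"
proof -
  have "filterlim (\<lambda>s::real. s - 1) at_bot at_bot" by real_asymp
  from filterlim_compose[OF lim this]
  have "((\<lambda>s::real. a + (s - 1) *\<^sub>R b) \<longlongrightarrow> c) at_bot" by simp
  with lim have "((\<lambda>s::real. (a + s *\<^sub>R b) - (a + (s - 1) *\<^sub>R b)) \<longlongrightarrow> c - c) at_bot"
    by (intro tendsto_diff)
  then have "((\<lambda>s::real. b) \<longlongrightarrow> 0) at_bot" by (simp add: algebra_simps)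
  then have b: "b = 0" using tendsto_unique[OF trivial_limit_at_bot_linorder tendsto_const] by blast
  with lim have "((\<lambda>s::real. a) \<longlongrightarrow> c) at_bot" by simp
  then have "a = c" using tendsto_unique[OF trivial_limit_at_bot_linorder tendsto_const] by blast
  with b show ?thesis by simp
qed

lemma alternating_bilinear_skew:
  fixes B :: "'a::real_vector \<Rightarrow> 'a \<Rightarrow> real"
  assumes "bilinear B" and "\<And>x. B x x = 0"
  shows "B a b = - B b a"
proof -
  have "0 = B (a + b) (a + b)" using assms(2) by simp
  also have "\<dots> = B a a + B a b + B b a + B b b"
    using assms(1) by (simp add: bilinear_ladd bilinear_radd)
  finally show ?thesis using assms(2)[of a] assms(2)[of b] by linarith
qed

lemma symplectic_form_eqI:
  assumes "symplectic_form \<Omega>" and "\<And>y. \<Omega> a y = \<Omega> b y"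
  shows "a = b"
proof -
  have "\<forall>y. \<Omega> (a - b) y = 0" using assms by (simp add: symplectic_form_def bilinear_lsub)
  then show ?thesis using assms(1) unfolding symplectic_form_def by auto
qed

lemma symplectic_linear_surj:
  assumes sf: "symplectic_form \<Omega>" and L: "linear L" and sp: "\<And>x y. \<Omega> (L x) (L y) = \<Omega> x y"
  shows "surj L"
proof -
  have "inj L"
    unfolding linear_injective_0[OF L]
  proof (intro allI impI)
    fix w assume "L w = 0"
    then have "\<Omega> w v = 0" for v
      using sf sp[of w v] by (simp add: symplectic_form_def bilinear_lzero)
    then show "w = 0" using sf unfolding symplectic_form_def by auto
  qed
  then show ?thesis using linear_injective_imp_surjective[OF L] by blast
qed

lemma theta_bilinear:
  assumes "bilinear \<Omega>" and "linear A"
  shows "bilinear (theta \<Omega> A)"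
  unfolding bilinear_def linear_iff theta_def
  by (simp add: bilinear_ladd[OF assms(1)] bilinear_lsub[OF assms(1)] bilinear_radd[OF assms(1)] bilinear_lmul[OF assms(1)]
      bilinear_rmul[OF assms(1)] linear_add[OF assms(2)] linear_scale[OF assms(2)] algebra_simps)

lemma theta_antisym:
  assumes sf: "symplectic_form \<Omega>" and sa: "\<And>x y. \<Omega> (A x) y + \<Omega> x (A y) = 0"
  shows "theta \<Omega> A a b - theta \<Omega> A b a = \<Omega> a b"
proof -
  have bl: "bilinear \<Omega>" and alt: "\<And>x. \<Omega> x x = 0" using sf unfolding symplectic_form_def by auto
  have "\<Omega> b a = - \<Omega> a b" and "\<Omega> b (A a) = - \<Omega> (A a) b"
    by (rule alternating_bilinear_skew[OF bl alt])+
  moreover have "\<Omega> (A b) a = - \<Omega> b (A a)" using sa[of b a] by linarith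
  ultimately show ?thesis
    unfolding theta_def using bl by (simp add: bilinear_lsub algebra_simps)
qed

text \<open>For a bilinear \<open>B\<close>, the one-form \<open>z \<mapsto> B z\<close> has exterior derivative
\<open>(w, v) \<mapsto> B w v - B v w\<close>; a map preserving the form preserves it, the second-order terms
cancelling by the symmetry of second derivatives.\<close>

lemma pullback_bilinear_antisym:
  fixes B :: "'a::euclidean_space \<Rightarrow> 'a \<Rightarrow> real"
  assumes B: "bilinear B" and g: "smooth_map g" and pb: "pullback g B = B"
  defines "Dg \<equiv> \<lambda>z. frechet_derivative g (at z)"
  shows "B (Dg z w) (Dg z v) - B (Dg z v) (Dg z w) = B w v - B v w"
proof -
  define D2 where "D2 z v = frechet_derivative (\<lambda>z. Dg z v) (at z)" for z v
  have d1: "\<And>z. (g has_derivative Dg z) (at z)"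
    and d2: "\<And>v z. ((\<lambda>z. Dg z v) has_derivative D2 z v) (at z)"
    and c2: "\<And>v w. continuous_on UNIV (\<lambda>z. D2 z v w)"
    unfolding D2_def Dg_def using smooth_map_C2[OF g] by auto
  have bb: "bounded_bilinear B" using B bilinear_conv_bounded_bilinear by blast
  have first_variation: "B (Dg z w) (Dg z v) + B (g z) (D2 z v w) = B w v" for v w
  proof -
    have "B (g x) (Dg x v) = B x v" for x
      using fun_cong[OF fun_cong[OF pb, of x], of v] unfolding Dg_def pullback_def .
    then have "((\<lambda>z. B z v) has_derivative (\<lambda>w. B (g z) (D2 z v w) + B (Dg z w) (Dg z v))) (at z)"
      by (intro has_derivative_transform[OF UNIV_I _ bounded_bilinear.FDERIV[OF bb d1 d2]]) simp
    moreover have "((\<lambda>z. B z v) has_derivative (\<lambda>w. B z 0 + B w v)) (at z)"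
      by (rule bounded_bilinear.FDERIV[OF bb has_derivative_ident has_derivative_const])
    ultimately have "(\<lambda>w. B (g z) (D2 z v w) + B (Dg z w) (Dg z v)) = (\<lambda>w. B z 0 + B w v)"
      by (rule has_derivative_unique)
    then show ?thesis using B by (simp add: fun_eq_iff bilinear_rzero add.commute)
  qed
  have "D2 z v w = D2 z w v"
    by (rule second_derivative_symmetric[OF d1 d2 c2])
  then show ?thesis
    using first_variation[of v w] first_variation[of w v] by simp
qed

lemma Aut_theta_derivative_symplectic:
  assumes sf: "symplectic_form \<Omega>" and lA: "linear A"
    and sa: "\<And>x y. \<Omega> (A x) y + \<Omega> x (A y) = 0"
    and g: "g \<in> Aut (theta \<Omega> A)"
  shows "\<Omega> (frechet_derivative g (at z) w) (frechet_derivative g (at z) v) = \<Omega> w v"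
proof -
  have "bilinear (theta \<Omega> A)"
    using sf lA theta_bilinear unfolding symplectic_form_def by blast
  moreover have "smooth_map g" and "pullback g (theta \<Omega> A) = theta \<Omega> A"
    using g unfolding Aut_def diffeomorphism_def by auto
  ultimately show ?thesis
    using pullback_bilinear_antisym[of "theta \<Omega> A" g z w v] by (simp add: theta_antisym[OF sf sa])
qed

text \<open>For \<open>A\<^sup>2 = 0\<close> this is the flow of the vector field \<open>z \<mapsto> z - A z\<close>.\<close>

definition liouville_flow :: "('a::real_vector \<Rightarrow> 'a) \<Rightarrow> real \<Rightarrow> 'a \<Rightarrow> 'a" where
  "liouville_flow A s z = exp s *\<^sub>R (z - s *\<^sub>R A z)"

lemma liouville_flow_linear: "linear A \<Longrightarrow> linear (liouville_flow A s)"
  unfolding linear_iff liouville_flow_def by (simp add: linear_add linear_scale algebra_simps)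

lemma liouville_flow_0 [simp]: "liouville_flow A 0 z = z"
  by (simp add: liouville_flow_def)

lemma liouville_flow_add:
  assumes "linear A" and "\<And>x. A (A x) = 0"
  shows "liouville_flow A s (liouville_flow A t z) = liouville_flow A (s + t) z"
  unfolding liouville_flow_def
  by (simp add: linear_scale[OF assms(1)] linear_diff[OF assms(1)] assms(2) exp_add algebra_simps)

lemma liouville_flow_has_derivative:
  assumes "linear A" and "\<And>x. A (A x) = 0"
  shows "((\<lambda>s. liouville_flow A s z) has_derivative
           (\<lambda>t. t *\<^sub>R (liouville_flow A s z - A (liouville_flow A s z)))) (at s)"
proof -
  have "((\<lambda>s. liouville_flow A s z) has_derivative
          (\<lambda>t. t *\<^sub>R (exp s *\<^sub>R (z - s *\<^sub>R A z)) + exp s *\<^sub>R (- (t *\<^sub>R A z)))) (at s)"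
    unfolding liouville_flow_def by (rule derivative_eq_intros refl | simp)+
  then show ?thesis
    by (simp add: liouville_flow_def linear_scale[OF assms(1)] linear_diff[OF assms(1)] assms(2)
        algebra_simps)
qed

lemma liouville_flow_tendsto_zero:
  fixes A :: "'a::real_normed_vector \<Rightarrow> 'a"
  shows "((\<lambda>s. liouville_flow A s z) \<longlongrightarrow> 0) at_bot"
proof -
  have l: "((\<lambda>s::real. s * exp s) \<longlongrightarrow> 0) at_bot" by real_asymp
  have "((\<lambda>s. exp s *\<^sub>R z - (s * exp s) *\<^sub>R A z) \<longlongrightarrow> 0 *\<^sub>R z - 0 *\<^sub>R A z) at_bot"
    by (intro tendsto_intros exp_at_bot l)
  then show ?thesis unfolding liouville_flow_def by (simp add: algebra_simps)
qed

lemma liouville_flow_fixed_point: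
  assumes lA: "linear A" and nil: "\<And>x. A (A x) = 0" and fixed: "liouville_flow A 1 x = x"
  shows "x = 0"
proof -
  have "A x = exp 1 *\<^sub>R A x"
    using arg_cong[OF fixed, of A]
    by (simp add: liouville_flow_def linear_scale[OF lA] linear_diff[OF lA] nil)
  then have "(exp 1 - 1) *\<^sub>R A x = 0" by (simp add: algebra_simps)
  then have "A x = 0" by simp
  with fixed have "x = exp 1 *\<^sub>R x" by (simp add: liouville_flow_def)
  then have "(exp 1 - 1) *\<^sub>R x = 0" by (simp add: algebra_simps)
  then show ?thesis by simp
qed

lemma commutes_with_liouville_flowI:
  fixes g :: "'a::euclidean_space \<Rightarrow> 'a"
  assumes lA: "linear A" and nil: "\<And>x. A (A x) = 0"
    and d1: "\<And>z. (g has_derivative Dg z) (at z)"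
    and liouville: "\<And>z. Dg z (z - A z) = g z - A (g z)"
  shows "g (liouville_flow A s z) = liouville_flow A s (g z)"
proof -
  have blA: "bounded_linear A" using lA linear_conv_bounded_linear by blast
  define h where "h s = g (liouville_flow A s z)" for s
  have dh: "(h has_derivative (\<lambda>t. t *\<^sub>R (h s - A (h s)))) (at s)" for s
  proof -
    have "(h has_derivative
        (\<lambda>t. Dg (liouville_flow A s z) (t *\<^sub>R (liouville_flow A s z - A (liouville_flow A s z))))) (at s)"
      unfolding h_def by (rule has_derivative_compose[OF liouville_flow_has_derivative[OF lA nil] d1])
    moreover have "linear (Dg (liouville_flow A s z))" using d1 has_derivative_linear by blast
    ultimately show ?thesis unfolding h_def by (simp add: linear_scale liouville)
  qed
  txt \<open>\<open>h\<close> solves the same ODE as the flow, so \<open>\<phi>\<^sub>-\<^sub>s(h s)\<close> is constant.\<close>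
  have inverse_flow: "liouville_flow A (- s) (h s) = exp (- s) *\<^sub>R (h s + s *\<^sub>R A (h s))" for s
    by (simp add: liouville_flow_def)
  have "((\<lambda>s. exp (- s) *\<^sub>R (h s + s *\<^sub>R A (h s))) has_derivative (\<lambda>_. 0)) (at s)" for s
  proof -
    have dAh: "((\<lambda>s. A (h s)) has_derivative (\<lambda>t. A (t *\<^sub>R (h s - A (h s))))) (at s)"
      by (rule bounded_linear.has_derivative[OF blA dh])
    have "((\<lambda>s. exp (- s) *\<^sub>R (h s + s *\<^sub>R A (h s))) has_derivative
        (\<lambda>t. exp (- s) *\<^sub>R (t *\<^sub>R (h s - A (h s)) + (s *\<^sub>R A (t *\<^sub>R (h s - A (h s))) + t *\<^sub>R A (h s)))
          + (- t * exp (- s)) *\<^sub>R (h s + s *\<^sub>R A (h s)))) (at s)"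
      by (rule derivative_eq_intros dh dAh refl | simp)+
    moreover have "A (t *\<^sub>R (h s - A (h s))) = t *\<^sub>R A (h s)" for t
      by (simp add: linear_scale[OF lA] linear_diff[OF lA] nil)
    ultimately show ?thesis by (simp add: algebra_simps)
  qed
  then have "liouville_flow A (- s) (h s) = liouville_flow A (- 0) (h 0)"
    unfolding inverse_flow using has_derivative_zero_unique[of UNIV] by blast
  then have "liouville_flow A (- s) (h s) = g z"
    by (simp add: h_def)
  then have "liouville_flow A s (g z) = h s"
    using liouville_flow_add[OF lA nil, of s "- s" "h s"] by simp
  then show ?thesis unfolding h_def ..
qed

lemma derivative_commutes_with_liouville_flow:
  fixes g :: "'a::euclidean_space \<Rightarrow> 'a"
  assumes lA: "linear A"
    and d1: "\<And>z. (g has_derivative Dg z) (at z)"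
    and eqv: "\<And>s z. g (liouville_flow A s z) = liouville_flow A s (g z)"
  shows "Dg (liouville_flow A s z) (liouville_flow A s u) = liouville_flow A s (Dg z u)"
proof -
  have dflow: "(liouville_flow A s has_derivative liouville_flow A s) (at x)" for x
    by (rule linear_imp_has_derivative[OF liouville_flow_linear[OF lA]])
  have "((\<lambda>x. g (liouville_flow A s x)) has_derivative
      (\<lambda>u. Dg (liouville_flow A s z) (liouville_flow A s u))) (at z)"
    by (rule has_derivative_compose[OF dflow d1])
  moreover have "((\<lambda>x. liouville_flow A s (g x)) has_derivative (\<lambda>u. liouville_flow A s (Dg z u))) (at z)"
    by (rule has_derivative_compose[OF d1 dflow])
  ultimately have "(\<lambda>u. Dg (liouville_flow A s z) (liouville_flow A s u)) = (\<lambda>u. liouville_flow A s (Dg z u))"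
    unfolding eqv by (rule has_derivative_unique)
  then show ?thesis by (rule fun_cong)
qed

text \<open>Differentiating the equivariance gives \<open>g'(\<phi>\<^sub>s z)(u - sAu) = g'(z)u - sAg'(z)u\<close>; the left
side converges as \<open>s \<rightarrow> -\<infinity>\<close> because \<open>\<phi>\<^sub>s z \<rightarrow> 0\<close>, so the coefficients of \<open>s\<close> vanish.\<close>

lemma commutes_with_liouville_flow_derivative_const:
  fixes g :: "'a::euclidean_space \<Rightarrow> 'a"
  assumes lA: "linear A" and nil: "\<And>x. A (A x) = 0"
    and d1: "\<And>z. (g has_derivative Dg z) (at z)"
    and c1: "\<And>y. isCont (\<lambda>p. Dg p y) 0"
    and eqv: "\<And>s z. g (liouville_flow A s z) = liouville_flow A s (g z)"
  shows "Dg z w = Dg 0 w \<and> Dg z (A w) = A (Dg z w)"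
proof -
  have lin: "linear (Dg p)" for p using d1 has_derivative_linear by blast
  have pulled: "Dg (liouville_flow A s z) (u - s *\<^sub>R A u) = Dg z u - s *\<^sub>R A (Dg z u)" for s u
  proof -
    have "exp s *\<^sub>R Dg (liouville_flow A s z) (u - s *\<^sub>R A u) = exp s *\<^sub>R (Dg z u - s *\<^sub>R A (Dg z u))"
      using derivative_commutes_with_liouville_flow[OF lA d1 eqv, of s z u]
      unfolding liouville_flow_def[of A s u] liouville_flow_def[of A s "Dg z u"]
      by (simp add: linear_scale[OF lin])
    then show ?thesis by simp
  qed
  have lim: "((\<lambda>s. Dg (liouville_flow A s z) y) \<longlongrightarrow> Dg 0 y) at_bot" for y
    by (rule isCont_tendsto_compose[OF c1 liouville_flow_tendsto_zero])
  have "Dg (liouville_flow A s z) (A w) = Dg z (A w) + s *\<^sub>R (- A (Dg z (A w)))" for s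
    using pulled[of s "A w"] by (simp add: nil)
  with lim[of "A w"] have "((\<lambda>s. Dg z (A w) + s *\<^sub>R (- A (Dg z (A w)))) \<longlongrightarrow> Dg 0 (A w)) at_bot"
    by simp
  from tendsto_affine_at_bot_imp[OF this]
  have A_part: "A (Dg z (A w)) = 0" "Dg z (A w) = Dg 0 (A w)"
    by auto
  have "Dg (liouville_flow A s z) w = Dg z w + s *\<^sub>R (Dg z (A w) - A (Dg z w))" for s
  proof -
    have "Dg (liouville_flow A s z) w
        = Dg (liouville_flow A s z) (w - s *\<^sub>R A w) + s *\<^sub>R Dg (liouville_flow A s z) (A w)"
      by (simp add: linear_diff[OF lin] linear_scale[OF lin])
    then show ?thesis using pulled[of s w] pulled[of s "A w"] A_part by (simp add: nil algebra_simps)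
  qed
  with lim[of w] have "((\<lambda>s. Dg z w + s *\<^sub>R (Dg z (A w) - A (Dg z w))) \<longlongrightarrow> Dg 0 w) at_bot"
    by simp
  from tendsto_affine_at_bot_imp[OF this] A_part show ?thesis
    by auto
qed

lemma commutes_with_liouville_flow_imp_linear:
  fixes g :: "'a::euclidean_space \<Rightarrow> 'a"
  assumes lA: "linear A" and nil: "\<And>x. A (A x) = 0"
    and d1: "\<And>z. (g has_derivative Dg z) (at z)"
    and c1: "\<And>y. isCont (\<lambda>p. Dg p y) 0"
    and eqv: "\<And>s z. g (liouville_flow A s z) = liouville_flow A s (g z)"
  shows "g = Dg 0" and "g \<circ> A = A \<circ> g"
proof -
  note const = commutes_with_liouville_flow_derivative_const[OF lA nil d1 c1 eqv]
  have lin: "linear (Dg 0)" using d1 has_derivative_linear by blast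
  have "liouville_flow A 1 0 = 0"
    by (simp add: liouville_flow_def linear_0[OF lA])
  then have "liouville_flow A 1 (g 0) = g 0"
    using eqv[of 1 0] by simp
  then have g0: "g 0 = 0"
    by (rule liouville_flow_fixed_point[OF lA nil])
  have "((\<lambda>x. g x - Dg 0 x) has_derivative (\<lambda>h. Dg y h - Dg 0 h)) (at y within UNIV)" for y
    by (intro has_derivative_diff d1 linear_imp_has_derivative lin)
  moreover have "(\<lambda>h. Dg y h - Dg 0 h) = (\<lambda>_. 0)" for y
    using const by auto
  ultimately have "g x - Dg 0 x = g 0 - Dg 0 0" for x
    using has_derivative_zero_unique[OF convex_UNIV, of "\<lambda>x. g x - Dg 0 x"] by simp
  then show g_lin: "g = Dg 0"
    using g0 linear_0[OF lin] by (auto simp: fun_eq_iff)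
  show "g \<circ> A = A \<circ> g"
    using const unfolding g_lin by (auto simp: fun_eq_iff)
qed

lemma Aut_theta_imp_Sp_commuting:
  assumes sf: "symplectic_form \<Omega>" and lA: "linear A"
    and sa: "\<And>x y. \<Omega> (A x) y + \<Omega> x (A y) = 0" and nil: "\<And>x. A (A x) = 0"
    and g: "g \<in> Aut (theta \<Omega> A)"
  shows "g \<in> Sp \<Omega> \<and> g \<circ> A = A \<circ> g"
proof -
  define Dg where "Dg z = frechet_derivative g (at z)" for z
  have bij: "bij g" and sm: "smooth_map g" and pb: "pullback g (theta \<Omega> A) = theta \<Omega> A"
    using g unfolding Aut_def diffeomorphism_def by auto
  have d1: "\<And>z. (g has_derivative Dg z) (at z)"
    and c1: "\<And>y. continuous_on UNIV (\<lambda>z. Dg z y)"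
    unfolding Dg_def using smooth_map_C2[OF sm] by auto
  have sp: "\<Omega> (Dg z w) (Dg z v) = \<Omega> w v" for z w v
    unfolding Dg_def by (rule Aut_theta_derivative_symplectic[OF sf lA sa g])
  have lin: "linear (Dg z)" for z using d1 has_derivative_linear by blast
  have liouville: "Dg z (z - A z) = g z - A (g z)" for z
  proof -
    have "\<Omega> (Dg z (z - A z)) (Dg z v) = \<Omega> (g z - A (g z)) (Dg z v)" for v
    proof -
      have "\<Omega> (Dg z (z - A z)) (Dg z v) = \<Omega> (z - A z) v"
        by (rule sp)
      also have "\<dots> = \<Omega> (g z - A (g z)) (Dg z v)"
        using fun_cong[OF fun_cong[OF pb, of z], of v] unfolding pullback_def theta_def Dg_def by simp
      finally show ?thesis .
    qed
    moreover have "surj (Dg z)"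
      by (rule symplectic_linear_surj[OF sf lin]) (rule sp)
    ultimately have "\<Omega> (Dg z (z - A z)) y = \<Omega> (g z - A (g z)) y" for y
      by (metis surjD)
    then show ?thesis
      by (rule symplectic_form_eqI[OF sf])
  qed
  have eqv: "g (liouville_flow A s z) = liouville_flow A s (g z)" for s z
    by (rule commutes_with_liouville_flowI[OF lA nil d1 liouville])
  have c0: "isCont (\<lambda>p. Dg p y) 0" for y
    using c1 by (simp add: continuous_on_eq_continuous_at)
  note g_lin = commutes_with_liouville_flow_imp_linear[OF lA nil d1 c0 eqv]
  have "linear g" and "\<Omega> (g x) (g y) = \<Omega> x y" for x y
    unfolding g_lin(1) by (rule lin, rule sp)
  then show ?thesis
    using bij g_lin(2) unfolding Sp_def by auto
qed

lemma Sp_commuting_in_Aut_theta: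
  assumes g: "g \<in> Sp \<Omega>" and comm: "g \<circ> A = A \<circ> g"
  shows "g \<in> Aut (theta \<Omega> A)"
proof -
  have lg: "linear g" and bij: "bij g" and sp: "\<And>x y. \<Omega> (g x) (g y) = \<Omega> x y"
    using g unfolding Sp_def by auto
  have "linear (inv g)"
    using inj_linear_imp_inv_linear[OF lg] bij bij_is_inj by blast
  then have diffeo: "diffeomorphism g"
    unfolding diffeomorphism_def using bij smooth_map_linear[OF lg] smooth_map_linear[of "inv g"] by blast
  have Dg: "frechet_derivative g (at z) = g" for z
    using frechet_derivative_at[OF linear_imp_has_derivative[OF lg]] by simp
  have "g z - A (g z) = g (z - A z)" for z
    using fun_cong[OF comm, of z] linear_diff[OF lg] by simp
  then have "pullback g (theta \<Omega> A) z v = theta \<Omega> A z v" for z v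
    unfolding pullback_def theta_def Dg by (simp add: sp)
  with diffeo show ?thesis
    unfolding Aut_def by (simp add: fun_eq_iff)
qed

theorem theorem5:
  fixes \<Omega> :: "'a::euclidean_space \<Rightarrow> 'a \<Rightarrow> real" and A :: "'a \<Rightarrow> 'a"
  assumes "symplectic_form \<Omega>"
    and "linear A"
    and "\<forall>x y. \<Omega> (A x) y + \<Omega> x (A y) = 0"
    and "A \<circ> A = (\<lambda>x. 0)"
  shows "Aut (theta \<Omega> A) = {g \<in> Sp \<Omega>. g \<circ> A = A \<circ> g}"
proof -
  have nil: "A (A x) = 0" for x using fun_cong[OF assms(4), of x] by simp
  show ?thesis
    using Aut_theta_imp_Sp_commuting[OF assms(1,2) assms(3)[rule_format] nil]
      Sp_commuting_in_Aut_theta by blast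
qed

end
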